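(* Let $(N_\mu)_{\mu\in\mathbb N}$ be positive integers with $N_{\mu+1}/N_\mu\to\infty$, and such that $\varepsilon_\mu:=\frac12\sqrt{N_\mu/N_{\mu+1}}$ is non-increasing. Define $\Delta:\mathbb N\times\mathbb N\to[0,\infty]$ by $$\Delta(n,m)=\inf\Big\{\sum_k\varepsilon_{\mu_k}:\ (\mu_k)\text{ a finite family of indices with } m\le\sum_kN_{\mu_k}\le n\Big\}$$ (infimum of the empty set $=+\infty$). Then $\Delta$ satisfies $\Delta(n+1,m)\le\Delta(n,m)\le\Delta(n,m+1)$ and $\Delta(n_1+n_2,m_1+m_2)\le\Delta(n_1,m_1)+\Delta(n_2,m_2)$, and $\Delta(N_\mu,N_\mu)\to0$ (so rate $1$ is attained along the sequence $(N_\mu,N_\mu)$). However, for $n_\mu=N_{\mu+1}-1$ and $m_\mu=\lceil\sqrt{N_\mu N_{\mu+1}}\rceil$ one has $m_\mu/n_\mu\to0$ while $\liminf_\mu\Delta(n_\mu,m_\mu)\ge\frac12$. *)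

theory Defs
  imports Complex_Main "HOL-Library.Multiset" "HOL-Library.Extended_Real" "HOL-Library.Liminf_Limsup"
begin

definition eps :: "(nat \<Rightarrow> nat) \<Rightarrow> nat \<Rightarrow> real" where
  "eps N \<mu> = sqrt (real (N \<mu>) / real (N (Suc \<mu>))) / 2"

definition Delta :: "(nat \<Rightarrow> nat) \<Rightarrow> nat \<Rightarrow> nat \<Rightarrow> ereal" where
  "Delta N n m = Inf {ereal (\<Sum>\<mu>\<in>#F. eps N \<mu>) | F.
      m \<le> (\<Sum>\<mu>\<in>#F. N \<mu>) \<and> (\<Sum>\<mu>\<in>#F. N \<mu>) \<le> n}"

end

theory Submission
  imports Defs
begin

text \<open>
  Monotonicity and subadditivity are inherited from the admissible families: widening the window
  admits more families, and the sum of two admissible families is admissible for the summed window.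
  The family \<open>{#\<mu>#}\<close> gives \<open>Delta N (N \<mu>) (N \<mu>) \<le> eps N \<mu> \<rightarrow> 0\<close>.
  For the lower bound, once \<open>\<mu>\<close> is large every block \<open>N \<nu>\<close> shorter than \<open>N (\<mu>+1)\<close> has \<open>\<nu> \<le> \<mu>\<close>
  and \<open>N \<nu> \<le> N \<mu>\<close>, hence \<open>eps N \<nu> \<ge> eps N \<mu>\<close>, so every block costs at least \<open>eps N \<mu> / N \<mu>\<close> per
  unit of length. A family covering \<open>sqrt (N \<mu> N (\<mu>+1))\<close> units therefore costs at least
  \<open>eps N \<mu> \<cdot> sqrt (N \<mu> N (\<mu>+1)) / N \<mu> = 1/2\<close>.
\<close>

lemma Inf_ereal_le_add:
  fixes S A B :: "ereal set"
  assumes A_nonneg: "\<And>a. a \<in> A \<Longrightarrow> 0 \<le> a" and B_nonneg: "\<And>b. b \<in> B \<Longrightarrow> 0 \<le> b"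
    and add_closed: "\<And>a b. a \<in> A \<Longrightarrow> b \<in> B \<Longrightarrow> a + b \<in> S"
  shows "Inf S \<le> Inf A + Inf B"
proof (cases "A = {} \<or> B = {}")
  case True
  have "0 \<le> Inf A" "0 \<le> Inf B"
    using A_nonneg B_nonneg by (auto intro: Inf_greatest)
  with True have "Inf A + Inf B = \<infinity>"
    by (auto simp: top_ereal_def)
  then show ?thesis
    by (simp only: ereal_less_eq(1))
next
  case False
  have "0 \<le> Inf B"
    using B_nonneg by (auto intro: Inf_greatest)
  then have "Inf A + Inf B = (INF a\<in>A. a + Inf B)"
    using INF_ereal_add_left[of A "Inf B" "\<lambda>x. x"] False A_nonneg by auto
  also have "\<dots> = (INF a\<in>A. INF b\<in>B. a + b)"
    using INF_ereal_add_right[of B _ "\<lambda>x. x"] False A_nonneg B_nonneg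
    by (intro INF_cong) force+
  also have "\<dots> \<ge> Inf S"
    by (intro INF_greatest Inf_lower add_closed)
  finally show ?thesis .
qed

lemma eps_nonneg: "0 \<le> eps N \<mu>"
  unfolding eps_def by simp

lemma sum_mset_eps_nonneg: "0 \<le> (\<Sum>\<mu>\<in>#F. eps N \<mu>)"
  using sum_mset_mono[of F "\<lambda>_. 0" "eps N"] by (simp add: eps_nonneg)

lemma Delta_le_sum_eps:
  assumes "m \<le> (\<Sum>\<mu>\<in>#F. N \<mu>)" "(\<Sum>\<mu>\<in>#F. N \<mu>) \<le> n"
  shows "Delta N n m \<le> ereal (\<Sum>\<mu>\<in>#F. eps N \<mu>)"
  unfolding Delta_def using assms by (intro Inf_lower) blast

lemma ereal_le_Delta:
  assumes "\<And>F. m \<le> (\<Sum>\<mu>\<in>#F. N \<mu>) \<Longrightarrow> (\<Sum>\<mu>\<in>#F. N \<mu>) \<le> n \<Longrightarrow> c \<le> (\<Sum>\<mu>\<in>#F. eps N \<mu>)"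
  shows "ereal c \<le> Delta N n m"
  unfolding Delta_def using assms by (auto intro!: Inf_greatest)

lemma Delta_nonneg: "0 \<le> Delta N n m"
  using ereal_le_Delta[of m N n 0] by (simp add: sum_mset_eps_nonneg zero_ereal_def)

lemma Delta_antimono_left: "n \<le> n' \<Longrightarrow> Delta N n' m \<le> Delta N n m"
  unfolding Delta_def by (rule Inf_superset_mono) auto

lemma Delta_mono_right: "m \<le> m' \<Longrightarrow> Delta N n m \<le> Delta N n m'"
  unfolding Delta_def by (rule Inf_superset_mono) auto

lemma Delta_subadditive: "Delta N (n1 + n2) (m1 + m2) \<le> Delta N n1 m1 + Delta N n2 m2"
  unfolding Delta_def
proof (rule Inf_ereal_le_add)
  fix a b
  assume "a \<in> {ereal (\<Sum>\<mu>\<in>#F. eps N \<mu>) | F. m1 \<le> (\<Sum>\<mu>\<in>#F. N \<mu>) \<and> (\<Sum>\<mu>\<in>#F. N \<mu>) \<le> n1}"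
    and "b \<in> {ereal (\<Sum>\<mu>\<in>#F. eps N \<mu>) | F. m2 \<le> (\<Sum>\<mu>\<in>#F. N \<mu>) \<and> (\<Sum>\<mu>\<in>#F. N \<mu>) \<le> n2}"
  then obtain F1 F2 where
    "a = ereal (\<Sum>\<mu>\<in>#F1. eps N \<mu>)" "m1 \<le> (\<Sum>\<mu>\<in>#F1. N \<mu>)" "(\<Sum>\<mu>\<in>#F1. N \<mu>) \<le> n1"
    "b = ereal (\<Sum>\<mu>\<in>#F2. eps N \<mu>)" "m2 \<le> (\<Sum>\<mu>\<in>#F2. N \<mu>)" "(\<Sum>\<mu>\<in>#F2. N \<mu>) \<le> n2"
    by blast
  then show "a + b \<in> {ereal (\<Sum>\<mu>\<in>#F. eps N \<mu>) | F.
      m1 + m2 \<le> (\<Sum>\<mu>\<in>#F. N \<mu>) \<and> (\<Sum>\<mu>\<in>#F. N \<mu>) \<le> n1 + n2}"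
    by (intro CollectI exI[of _ "F1 + F2"]) auto
qed (auto simp: sum_mset_eps_nonneg)

lemma inverse_ratio_tendsto_zero:
  assumes "filterlim (\<lambda>\<mu>. real (N (Suc \<mu>)) / real (N \<mu>)) at_top sequentially"
  shows "(\<lambda>\<mu>. real (N \<mu>) / real (N (Suc \<mu>))) \<longlonglongrightarrow> 0"
  using tendsto_inverse_0_at_top[OF assms] by simp

lemma eps_tendsto_zero:
  assumes "filterlim (\<lambda>\<mu>. real (N (Suc \<mu>)) / real (N \<mu>)) at_top sequentially"
  shows "eps N \<longlonglongrightarrow> 0"
  using tendsto_divide[OF tendsto_real_sqrt[OF inverse_ratio_tendsto_zero[OF assms]] tendsto_const[of 2]]
  by (simp add: eps_def[abs_def])

lemma Delta_diagonal_tendsto_zero: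
  assumes "filterlim (\<lambda>\<mu>. real (N (Suc \<mu>)) / real (N \<mu>)) at_top sequentially"
  shows "(\<lambda>\<mu>. Delta N (N \<mu>) (N \<mu>)) \<longlonglongrightarrow> 0"
proof (rule tendsto_sandwich[where f = "\<lambda>_. 0" and h = "\<lambda>\<mu>. ereal (eps N \<mu>)"])
  show "\<forall>\<^sub>F \<mu> in sequentially. Delta N (N \<mu>) (N \<mu>) \<le> ereal (eps N \<mu>)"
    using Delta_le_sum_eps[where F = "{#_#}"] by simp
  show "(\<lambda>\<mu>. ereal (eps N \<mu>)) \<longlonglongrightarrow> 0"
    using tendsto_ereal[OF eps_tendsto_zero[OF assms]] by (simp add: zero_ereal_def)
qed (simp_all add: Delta_nonneg)

lemma N_tendsto_at_top:
  assumes pos: "\<And>\<mu>. 0 < N \<mu>"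
    and ratio: "filterlim (\<lambda>\<mu>. real (N (Suc \<mu>)) / real (N \<mu>)) at_top sequentially"
  shows "filterlim (\<lambda>\<mu>. real (N \<mu>)) at_top sequentially"
proof -
  have "real (N (Suc \<mu>)) / real (N \<mu>) \<le> real (N (Suc \<mu>))" for \<mu>
    using pos[of \<mu>] by (simp add: divide_le_eq mult_le_cancel_left1)
  then have "filterlim (\<lambda>\<mu>. real (N (Suc \<mu>))) at_top sequentially"
    by (intro filterlim_at_top_mono[OF ratio] always_eventually) auto
  then show ?thesis
    using filterlim_sequentially_Suc[of "\<lambda>\<mu>. real (N \<mu>)"] by simp
qed

lemma ceiling_sqrt_div_le:
  fixes a b :: real
  assumes "0 < a" "2 \<le> b"
  shows "real (nat \<lceil>sqrt (a * b)\<rceil>) / (b - 1) \<le> 2 * sqrt (a / b) + 2 / b"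
proof -
  define x where "x = real (nat \<lceil>sqrt (a * b)\<rceil>)"
  have "0 \<le> sqrt (a * b)"
    using assms by simp
  then have "x \<le> sqrt (a * b) + 1"
    unfolding x_def by linarith
  have "sqrt (a * b) / b = sqrt (a / b)"
    using assms by (smt (verit) divide_divide_eq_right real_div_sqrt real_sqrt_divide real_sqrt_mult)
  have "0 \<le> x"
    unfolding x_def by (rule of_nat_0_le_iff)
  have "x / (b - 1) \<le> x / (b / 2)"
    using assms \<open>0 \<le> x\<close> by (intro divide_left_mono) auto
  also have "\<dots> = 2 * x / b"
    by simp
  also have "\<dots> \<le> 2 * (sqrt (a * b) + 1) / b"
    using \<open>x \<le> sqrt (a * b) + 1\<close> assms by (intro divide_right_mono) auto
  also have "\<dots> = 2 * sqrt (a / b) + 2 / b"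
    using \<open>sqrt (a * b) / b = sqrt (a / b)\<close> by (simp add: add_divide_distrib)
  finally show ?thesis
    unfolding x_def .
qed

lemma window_ratio_tendsto_zero:
  assumes pos: "\<And>\<mu>. 0 < N \<mu>"
    and ratio: "filterlim (\<lambda>\<mu>. real (N (Suc \<mu>)) / real (N \<mu>)) at_top sequentially"
  shows "(\<lambda>\<mu>. real (nat \<lceil>sqrt (real (N \<mu>) * real (N (Suc \<mu>)))\<rceil>) / real (N (Suc \<mu>) - 1))
    \<longlonglongrightarrow> 0"
proof (rule tendsto_sandwich[where f = "\<lambda>_. 0"
      and h = "\<lambda>\<mu>. 2 * sqrt (real (N \<mu>) / real (N (Suc \<mu>))) + 2 / real (N (Suc \<mu>))"])
  have N_Suc: "filterlim (\<lambda>\<mu>. real (N (Suc \<mu>))) at_top sequentially"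
    using filterlim_sequentially_Suc[of "\<lambda>\<mu>. real (N \<mu>)"] N_tendsto_at_top[OF pos ratio] by simp
  then have "\<forall>\<^sub>F \<mu> in sequentially. 2 \<le> real (N (Suc \<mu>))"
    unfolding filterlim_at_top by blast
  then show "\<forall>\<^sub>F \<mu> in sequentially.
      real (nat \<lceil>sqrt (real (N \<mu>) * real (N (Suc \<mu>)))\<rceil>) / real (N (Suc \<mu>) - 1)
        \<le> 2 * sqrt (real (N \<mu>) / real (N (Suc \<mu>))) + 2 / real (N (Suc \<mu>))"
  proof eventually_elim
    case (elim \<mu>)
    then have "real (N (Suc \<mu>) - 1) = real (N (Suc \<mu>)) - 1"
      by (simp add: of_nat_diff)
    then show ?case
      using elim pos[of \<mu>] by (simp only:) (rule ceiling_sqrt_div_le, simp_all)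
  qed
  have "(\<lambda>\<mu>. 2 * sqrt (real (N \<mu>) / real (N (Suc \<mu>))) + 2 / real (N (Suc \<mu>)))
      \<longlonglongrightarrow> 2 * sqrt 0 + 0"
    by (intro tendsto_intros inverse_ratio_tendsto_zero[OF ratio]
        tendsto_divide_0[OF tendsto_const] filterlim_at_top_imp_at_infinity N_Suc)
  then show "(\<lambda>\<mu>. 2 * sqrt (real (N \<mu>) / real (N (Suc \<mu>))) + 2 / real (N (Suc \<mu>))) \<longlonglongrightarrow> 0"
    by simp
qed (rule tendsto_const | intro always_eventually allI divide_nonneg_nonneg of_nat_0_le_iff)+

lemma eventually_shorter_blocks_earlier:
  assumes pos: "\<And>\<mu>. 0 < N \<mu>"
    and ratio: "filterlim (\<lambda>\<mu>. real (N (Suc \<mu>)) / real (N \<mu>)) at_top sequentially"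
  shows "\<forall>\<^sub>F \<mu> in sequentially. \<forall>\<nu>. N \<nu> < N (Suc \<mu>) \<longrightarrow> \<nu> \<le> \<mu> \<and> N \<nu> \<le> N \<mu>"
proof -
  obtain K where K: "\<And>\<mu>. K \<le> \<mu> \<Longrightarrow> 1 \<le> real (N (Suc \<mu>)) / real (N \<mu>)"
    using ratio unfolding filterlim_at_top eventually_sequentially by blast
  have mono: "N \<mu> \<le> N \<nu>" if "K \<le> \<mu>" "\<mu> \<le> \<nu>" for \<mu> \<nu>
    using \<open>\<mu> \<le> \<nu>\<close>
  proof (induction \<nu> rule: dec_induct)
    case (step \<nu>)
    with K[of \<nu>] pos[of \<nu>] that(1) show ?case
      by (simp add: le_divide_eq)
  qed simp
  define C where "C = Max (N ` {..K})"
  have "\<forall>\<^sub>F \<mu> in sequentially. real C \<le> real (N \<mu>)"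
    using N_tendsto_at_top[OF pos ratio] unfolding filterlim_at_top by blast
  with eventually_ge_at_top[of K] show ?thesis
  proof eventually_elim
    case (elim \<mu>)
    show ?case
    proof (intro allI impI conjI)
      fix \<nu> assume less: "N \<nu> < N (Suc \<mu>)"
      show "\<nu> \<le> \<mu>"
        using mono[of "Suc \<mu>" \<nu>] less elim by (cases "\<nu> \<le> \<mu>") auto
      show "N \<nu> \<le> N \<mu>"
      proof (cases "\<nu> \<le> K")
        case True
        then have "N \<nu> \<le> C"
          unfolding C_def by (intro Max_ge) auto
        with elim show ?thesis by simp
      next
        case False
        with mono[of \<nu> \<mu>] \<open>\<nu> \<le> \<mu>\<close> show ?thesis by simp
      qed
    qed
  qed
qed

lemma eps_mult_le_eps_mult:
  assumes "decseq (eps N)" "\<nu> \<le> \<mu>" "N \<nu> \<le> N \<mu>"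
  shows "eps N \<mu> * real (N \<nu>) \<le> eps N \<nu> * real (N \<mu>)"
proof -
  have "eps N \<mu> \<le> eps N \<nu>"
    using assms(1,2) unfolding decseq_def by blast
  then show ?thesis
    using assms(3) eps_nonneg[of N \<mu>] by (intro mult_mono) auto
qed

lemma eps_mult_sqrt:
  assumes "0 < N \<mu>" "0 < N (Suc \<mu>)"
  shows "eps N \<mu> * sqrt (real (N \<mu>) * real (N (Suc \<mu>))) = real (N \<mu>) / 2"
proof -
  have "sqrt (real (N \<mu>) / real (N (Suc \<mu>))) * sqrt (real (N \<mu>) * real (N (Suc \<mu>)))
      = sqrt (real (N \<mu>) * real (N \<mu>))"
    using assms by (simp add: real_sqrt_mult[symmetric])
  then show ?thesis
    unfolding eps_def by simp
qed

lemma half_le_Delta_window: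
  assumes pos: "\<And>\<mu>. 0 < N \<mu>" and dec: "decseq (eps N)"
    and earlier: "\<forall>\<nu>. N \<nu> < N (Suc \<mu>) \<longrightarrow> \<nu> \<le> \<mu> \<and> N \<nu> \<le> N \<mu>"
  shows "1/2 \<le> Delta N (N (Suc \<mu>) - 1) (nat \<lceil>sqrt (real (N \<mu>) * real (N (Suc \<mu>)))\<rceil>)"
proof -
  have cost: "1/2 \<le> (\<Sum>\<nu>\<in>#F. eps N \<nu>)"
    if lower: "nat \<lceil>sqrt (real (N \<mu>) * real (N (Suc \<mu>)))\<rceil> \<le> (\<Sum>\<nu>\<in>#F. N \<nu>)"
      and upper: "(\<Sum>\<nu>\<in>#F. N \<nu>) \<le> N (Suc \<mu>) - 1" for F
  proof -
    have each: "eps N \<mu> * real (N \<nu>) \<le> eps N \<nu> * real (N \<mu>)" if "\<nu> \<in># F" for \<nu>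
    proof (rule eps_mult_le_eps_mult[OF dec])
      have "N \<nu> \<le> (\<Sum>\<nu>\<in>#F. N \<nu>)"
        using multi_member_split[OF that] by auto
      with upper pos[of "Suc \<mu>"] show "\<nu> \<le> \<mu>" "N \<nu> \<le> N \<mu>"
        using earlier by auto
    qed
    have "eps N \<mu> * real (\<Sum>\<nu>\<in>#F. N \<nu>) = (\<Sum>\<nu>\<in>#F. eps N \<mu> * real (N \<nu>))"
      by (simp add: sum_mset_distrib_left multiset.map_comp o_def)
    also have "\<dots> \<le> (\<Sum>\<nu>\<in>#F. eps N \<nu> * real (N \<mu>))"
      using each by (rule sum_mset_mono)
    also have "\<dots> = (\<Sum>\<nu>\<in>#F. eps N \<nu>) * real (N \<mu>)"
      by (simp add: sum_mset_distrib_right multiset.map_comp o_def)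
    finally have "eps N \<mu> * real (\<Sum>\<nu>\<in>#F. N \<nu>) \<le> (\<Sum>\<nu>\<in>#F. eps N \<nu>) * real (N \<mu>)" .
    moreover have "sqrt (real (N \<mu>) * real (N (Suc \<mu>))) \<le> real (\<Sum>\<nu>\<in>#F. N \<nu>)"
      using lower by linarith
    then have "eps N \<mu> * sqrt (real (N \<mu>) * real (N (Suc \<mu>))) \<le> eps N \<mu> * real (\<Sum>\<nu>\<in>#F. N \<nu>)"
      using eps_nonneg by (rule mult_left_mono)
    moreover have "eps N \<mu> * sqrt (real (N \<mu>) * real (N (Suc \<mu>))) = real (N \<mu>) / 2"
      by (intro eps_mult_sqrt pos)
    ultimately have "1/2 * real (N \<mu>) \<le> (\<Sum>\<nu>\<in>#F. eps N \<nu>) * real (N \<mu>)"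
      by linarith
    then show ?thesis
      using pos[of \<mu>] by (simp add: mult_le_cancel_right_pos)
  qed
  have "ereal (1/2) \<le> Delta N (N (Suc \<mu>) - 1) (nat \<lceil>sqrt (real (N \<mu>) * real (N (Suc \<mu>)))\<rceil>)"
    by (rule ereal_le_Delta) (rule cost)
  then show ?thesis
    by (simp add: one_ereal_def)
qed

theorem mainTheorem18:
  fixes N :: "nat \<Rightarrow> nat"
  assumes pos: "\<And>\<mu>. N \<mu> > 0"
    and ratio: "filterlim (\<lambda>\<mu>. real (N (Suc \<mu>)) / real (N \<mu>)) at_top sequentially"
    and dec: "decseq (eps N)"
  shows "(\<forall>n m. Delta N (n + 1) m \<le> Delta N n m \<and> Delta N n m \<le> Delta N n (m + 1))
    \<and> (\<forall>n1 n2 m1 m2. Delta N (n1 + n2) (m1 + m2) \<le> Delta N n1 m1 + Delta N n2 m2)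
    \<and> ((\<lambda>\<mu>. Delta N (N \<mu>) (N \<mu>)) \<longlonglongrightarrow> 0)
    \<and> ((\<lambda>\<mu>. real (nat \<lceil>sqrt (real (N \<mu>) * real (N (Suc \<mu>)))\<rceil>) / real (N (Suc \<mu>) - 1))
          \<longlonglongrightarrow> 0)
    \<and> liminf (\<lambda>\<mu>. Delta N (N (Suc \<mu>) - 1) (nat \<lceil>sqrt (real (N \<mu>) * real (N (Suc \<mu>)))\<rceil>))
          \<ge> 1/2"
proof (intro conjI allI)
  fix n m
  show "Delta N (n + 1) m \<le> Delta N n m" "Delta N n m \<le> Delta N n (m + 1)"
    by (simp_all add: Delta_antimono_left Delta_mono_right)
next
  show "(\<lambda>\<mu>. Delta N (N \<mu>) (N \<mu>)) \<longlonglongrightarrow> 0"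
    using ratio by (rule Delta_diagonal_tendsto_zero)
next
  show "(\<lambda>\<mu>. real (nat \<lceil>sqrt (real (N \<mu>) * real (N (Suc \<mu>)))\<rceil>) / real (N (Suc \<mu>) - 1))
      \<longlonglongrightarrow> 0"
    using pos ratio by (rule window_ratio_tendsto_zero)
next
  show "1/2 \<le> liminf (\<lambda>\<mu>. Delta N (N (Suc \<mu>) - 1) (nat \<lceil>sqrt (real (N \<mu>) * real (N (Suc \<mu>)))\<rceil>))"
    by (rule Liminf_bounded, rule eventually_mono[OF eventually_shorter_blocks_earlier[OF pos ratio]])
      (rule half_le_Delta_window[OF pos dec])
qed (rule Delta_subadditive)

end
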